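(* Consider the two-player, two-item all-pay auction with budgets described in the context, with profile $(B_1,B_2,v_{11},v_{12},v_{21},v_{22})$. Suppose $B_1=B_2$ and $v_{11}=v_{12}=v_{21}=v_{22}$, and let $c=\min\{v_{11},B_1\}$. For $i\in\{1,2\}$ let player $i$'s mixed strategy be the probability distribution supported on the segment $\{(x_{i1},x_{i2}): x_{i1},x_{i2}\in[0,c],\ x_{i2}=-x_{i1}+c\}$ with constant density $f_i(x_{i1},x_{i2})=\frac{1}{\sqrt2\,c}$ with respect to arc length on that segment. Then this strategy profile $(f_1,f_2)$ is a Nash equilibrium.
   Context: Multi-item all-pay auction with budgets. Two players $i\in\{1,2\}$ ($-i$ is the opponent of $i$) and $n$ items $j\in\{1,\dots,n\}$. Player $i$ has budget $B_i\ge0$ and values item $j$ at $v_{ij}>0$. A pure strategy of player $i$ is a vector $(x_{i1},\dots,x_{in})$ with all $x_{ij}\ge0$ and $\sum_j x_{ij}\le B_i$; a mixed strategy is a probability distribution over this set. On each item $j$ the higher bid wins the item. Tie-breaking on item $j$: if $x_{1j}=x_{2j}=\min\{B_1,B_2,v_{1j},v_{2j}\}$ and $\min\{B_i,v_{ij}\}>\min\{B_{-i},v_{-ij}\}$ for some $i$, then player $i$ wins item $j$; in all other ties each player wins item $j$ with probability $\frac12$. Player $i$'s utility on item $j$ is $v_{ij}-x_{ij}$ if he wins it and $-x_{ij}$ otherwise, and his total utility is the sum over items. A Nash equilibrium is a pair of mixed strategies in which each player's strategy maximizes his expected total utility against the other's, over all mixed strategies satisfying his budget constraint. Here $n=2$.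 *)

theory Defs
  imports "HOL-Probability.Probability"
begin

text \<open>Players are 1 and 2 (opponent of i is 3 - i), items are 1 and 2.
  Budgets B :: nat => real (B i), values v :: nat => nat => real (v i j).\<close>

definition bid :: "real \<times> real \<Rightarrow> nat \<Rightarrow> real" where
  "bid x j = (if j = 1 then fst x else snd x)"

definition feasible :: "(nat \<Rightarrow> real) \<Rightarrow> nat \<Rightarrow> real \<times> real \<Rightarrow> bool" where
  "feasible B i x \<longleftrightarrow> fst x \<ge> 0 \<and> snd x \<ge> 0 \<and> fst x + snd x \<le> B i"

definition win_prob :: "(nat \<Rightarrow> real) \<Rightarrow> (nat \<Rightarrow> nat \<Rightarrow> real) \<Rightarrow> nat \<Rightarrow> nat \<Rightarrow> real \<Rightarrow> real \<Rightarrow> real" where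
  "win_prob B v i j a b =
    (let m = min (min (B 1) (B 2)) (min (v 1 j) (v 2 j));
         ci = min (B i) (v i j); co = min (B (3 - i)) (v (3 - i) j)
     in if a > b then 1
        else if a < b then 0
        else if a = m \<and> ci > co then 1
        else if a = m \<and> co > ci then 0
        else 1 / 2)"

definition utility :: "(nat \<Rightarrow> real) \<Rightarrow> (nat \<Rightarrow> nat \<Rightarrow> real) \<Rightarrow> nat \<Rightarrow> real \<times> real \<Rightarrow> real \<times> real \<Rightarrow> real" where
  "utility B v i x y = (\<Sum>j\<in>{1,2::nat}. win_prob B v i j (bid x j) (bid y j) * v i j - bid x j)"

definition mixed_strategy :: "(nat \<Rightarrow> real) \<Rightarrow> nat \<Rightarrow> (real \<times> real) measure \<Rightarrow> bool" where
  "mixed_strategy B i \<sigma> \<longleftrightarrow> prob_space \<sigma> \<and> sets \<sigma> = sets (borel :: (real \<times> real) measure)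
     \<and> (AE x in \<sigma>. feasible B i x)"

definition exp_utility :: "(nat \<Rightarrow> real) \<Rightarrow> (nat \<Rightarrow> nat \<Rightarrow> real) \<Rightarrow> nat \<Rightarrow> (real \<times> real) measure \<Rightarrow> (real \<times> real) measure \<Rightarrow> real" where
  "exp_utility B v i \<sigma> \<tau> = (\<integral>x. (\<integral>y. utility B v i x y \<partial>\<tau>) \<partial>\<sigma>)"

definition nash_eq :: "(nat \<Rightarrow> real) \<Rightarrow> (nat \<Rightarrow> nat \<Rightarrow> real) \<Rightarrow> (real \<times> real) measure \<Rightarrow> (real \<times> real) measure \<Rightarrow> bool" where
  "nash_eq B v \<sigma>1 \<sigma>2 \<longleftrightarrow>
     mixed_strategy B 1 \<sigma>1 \<and> mixed_strategy B 2 \<sigma>2 \<and>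
     (\<forall>\<sigma>. mixed_strategy B 1 \<sigma> \<longrightarrow> exp_utility B v 1 \<sigma> \<sigma>2 \<le> exp_utility B v 1 \<sigma>1 \<sigma>2) \<and>
     (\<forall>\<sigma>. mixed_strategy B 2 \<sigma> \<longrightarrow> exp_utility B v 2 \<sigma> \<sigma>1 \<le> exp_utility B v 2 \<sigma>2 \<sigma>1)"

text \<open>The distribution on the segment {(x1,x2). x1,x2 in [0,c], x2 = c - x1} with constant
  density 1/(sqrt 2 * c) with respect to arc length: arc length s in [0, sqrt 2 * c]
  parametrises the point (s / sqrt 2, c - s / sqrt 2).\<close>
definition segment_strategy :: "real \<Rightarrow> (real \<times> real) measure" where
  "segment_strategy c =
     distr (density (restrict_space lborel {0 .. sqrt 2 * c}) (\<lambda>s. ennreal (1 / (sqrt 2 * c))))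
           borel (\<lambda>s. (s / sqrt 2, c - s / sqrt 2))"

end

theory Submission
  imports Defs
begin

text \<open>With equal budgets and a common value \<open>V\<close> no tie is ever broken asymmetrically, so a bid
  \<open>x\<close> earns \<open>V\<close> times its chance of outbidding the opponent on each item, minus \<open>x\<^sub>1 + x\<^sub>2\<close>.
  Against the uniform distribution on the segment \<open>y\<^sub>1 + y\<^sub>2 = c\<close> each opponent bid is uniform
  on \<open>[0, c]\<close>, so the expected payoff of a nonnegative bid \<open>x\<close> is
  \<open>V/c (min c x\<^sub>1 + min c x\<^sub>2) - x\<^sub>1 - x\<^sub>2\<close>. Since \<open>c = min V B\<close>, this is at most \<open>V - c\<close> for every
  feasible bid, with equality on the segment itself; hence the segment strategy is a best
  reply to itself.\<close>

definition win_share :: "real \<Rightarrow> real \<Rightarrow> real" where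
  "win_share a b = (if a > b then 1 else if a < b then 0 else 1/2)"

lemma borel_measurable_win_share[measurable]:
  assumes [measurable]: "f \<in> borel_measurable M" "g \<in> borel_measurable M"
  shows "(\<lambda>t. win_share (f t) (g t)) \<in> borel_measurable M"
  unfolding win_share_def by measurable

lemma utility_equal_values:
  assumes "B 1 = B 2" and "\<forall>i\<in>{1, 2}. \<forall>j\<in>{1, 2}. v i j = V" and "i \<in> {1, 2}"
  shows "utility B v i x y = V * (win_share (fst x) (fst y) + win_share (snd x) (snd y)) - fst x - snd x"
proof -
  have "v 1 1 = V" "v 1 2 = V" "v 2 1 = V" "v 2 2 = V"
    using assms(2) by auto
  with assms(1,3) show ?thesis
    unfolding utility_def win_prob_def bid_def win_share_def Let_def
    by (elim insertE) (simp_all add: numeral_2_eq_2)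
qed

lemma segment_parametrization_measurable:
  "(\<lambda>s::real. (s / sqrt 2, c - s / sqrt 2))
     \<in> measurable (density (restrict_space lborel {0..sqrt 2 * c}) (\<lambda>s. ennreal (1 / (sqrt 2 * c)))) borel"
  by (subst measurable_cong_sets[OF sets_density refl]) (auto intro: measurable_restrict_space1)

lemma integral_segment_strategy:
  fixes h :: "real \<times> real \<Rightarrow> real"
  assumes c: "c > 0" and [measurable]: "h \<in> borel_measurable borel"
  shows "(\<integral>y. h y \<partial>segment_strategy c) = (\<integral>t. indicator {0..c} t * h (t, c - t) \<partial>lborel) / c"
proof -
  let ?L = "sqrt 2 * c"
  let ?f = "\<lambda>s. indicator {0..?L} s *\<^sub>R ((1 / ?L) *\<^sub>R h (s / sqrt 2, c - s / sqrt 2))"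
  have "(\<integral>y. h y \<partial>segment_strategy c)
      = (\<integral>s. h (s / sqrt 2, c - s / sqrt 2) \<partial>density (restrict_space lborel {0..?L}) (\<lambda>s. ennreal (1 / ?L)))"
    unfolding segment_strategy_def
    by (rule integral_distr[OF segment_parametrization_measurable]) simp
  also have "\<dots> = (\<integral>s. (1 / ?L) *\<^sub>R h (s / sqrt 2, c - s / sqrt 2) \<partial>restrict_space lborel {0..?L})"
    using c by (intro integral_density) (auto intro: measurable_restrict_space1)
  also have "\<dots> = (\<integral>s. ?f s \<partial>lborel)"
    by (rule integral_restrict_space) auto
  also have "\<dots> = \<bar>sqrt 2\<bar> *\<^sub>R (\<integral>t. ?f (0 + sqrt 2 * t) \<partial>lborel)"
    by (rule lborel_integral_real_affine) simp
  also have "(\<lambda>t. ?f (0 + sqrt 2 * t)) = (\<lambda>t. (1 / ?L) * (indicator {0..c} t * h (t, c - t)))"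
    using c by (auto simp: indicator_def zero_le_mult_iff)
  finally show ?thesis
    using c by simp
qed

lemma AE_segment_strategy:
  assumes "c > 0" and "Measurable.pred borel P" and "\<And>t. 0 \<le> t \<Longrightarrow> t \<le> c \<Longrightarrow> P (t, c - t)"
  shows "AE x in segment_strategy c. P x"
  unfolding segment_strategy_def
proof (subst AE_distr_iff[OF segment_parametrization_measurable])
  show "{x \<in> space borel. P x} \<in> sets borel"
    using assms(2) by (simp add: pred_def)
  have "P (s / sqrt 2, c - s / sqrt 2)" if "s \<in> {0..sqrt 2 * c}" for s
    using that by (intro assms(3)) (auto simp: field_simps)
  then show "AE s in density (restrict_space lborel {0..sqrt 2 * c}) (\<lambda>s. ennreal (1 / (sqrt 2 * c))).
      P (s / sqrt 2, c - s / sqrt 2)"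
    by (subst AE_density) (auto simp: AE_restrict_space_iff)
qed

lemma prob_space_segment_strategy:
  assumes c: "c > 0"
  shows "prob_space (segment_strategy c)"
proof
  have "measure (segment_strategy c) (space (segment_strategy c)) = (\<integral>y. 1 \<partial>segment_strategy c)"
    by simp
  also have "\<dots> = 1"
    using c by (subst integral_segment_strategy) auto
  finally have "measure (segment_strategy c) (space (segment_strategy c)) = 1" .
  moreover from this have "emeasure (segment_strategy c) (space (segment_strategy c)) \<noteq> \<infinity>"
    by (auto simp: measure_def)
  ultimately show "emeasure (segment_strategy c) (space (segment_strategy c)) = 1"
    by (simp add: emeasure_eq_ennreal_measure)
qed

lemma mixed_strategy_segment_strategy:
  assumes "c > 0" and "c \<le> B i"
  shows "mixed_strategy B i (segment_strategy c)"
  unfolding mixed_strategy_def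
proof (intro conjI)
  show "prob_space (segment_strategy c)"
    using assms(1) by (rule prob_space_segment_strategy)
  show "sets (segment_strategy c) = sets borel"
    by (simp add: segment_strategy_def)
  have "Measurable.pred borel (feasible B i)"
    unfolding feasible_def borel_prod[symmetric] by measurable
  then show "AE x in segment_strategy c. feasible B i x"
    by (rule AE_segment_strategy[OF assms(1)]) (use assms(2) in \<open>auto simp: feasible_def\<close>)
qed

definition segment_payoff :: "real \<Rightarrow> real \<Rightarrow> real \<times> real \<Rightarrow> real" where
  "segment_payoff c V x = V / c * (max 0 (min c (fst x)) + max 0 (min c (snd x))) - fst x - snd x"

lemma measure_lborel_Icc_max: "measure lborel {l..u::real} = max 0 (u - l)"
  by (cases "l \<le> u") auto

lemma integral_payoff_against_segment:
  assumes c: "c > 0"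
  shows "(\<integral>y. V * (win_share (fst x) (fst y) + win_share (snd x) (snd y)) - fst x - snd x
      \<partial>segment_strategy c) = segment_payoff c V x"
proof -
  obtain a b where x: "x = (a, b)"
    by (cases x)
  have "(\<lambda>y. V * (win_share a (fst y) + win_share b (snd y)) - a - b) \<in> borel_measurable borel"
    unfolding borel_prod[symmetric] by measurable
  then have "(\<integral>y. V * (win_share a (fst y) + win_share b (snd y)) - a - b \<partial>segment_strategy c)
      = (\<integral>t. indicator {0..c} t * (V * (win_share a t + win_share b (c - t)) - a - b) \<partial>lborel) / c"
    using c by (simp add: integral_segment_strategy)
  also have "(\<integral>t. indicator {0..c} t * (V * (win_share a t + win_share b (c - t)) - a - b) \<partial>lborel)
      = (\<integral>t. V * indicator {0..min c a} t + V * indicator {max 0 (c - b)..c} t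
          - (a + b) * indicator {0..c} t \<partial>lborel)"
  proof (rule integral_cong_AE)
    show "AE t in lborel. indicator {0..c} t * (V * (win_share a t + win_share b (c - t)) - a - b)
        = V * indicator {0..min c a} t + V * indicator {max 0 (c - b)..c} t - (a + b) * indicator {0..c} t"
      \<comment> \<open>the ties \<open>t = a\<close> and \<open>t = c - b\<close> are null sets\<close>
      using AE_lborel_singleton[of a] AE_lborel_singleton[of "c - b"]
      by eventually_elim (auto simp: indicator_def win_share_def algebra_simps)
  qed auto
  also have "\<dots> = V * max 0 (min c a) + V * max 0 (min c b) - (a + b) * c"
    using c by (simp add: integrable_indicator_iff measure_lborel_Icc_max max_def min_def)
  finally show ?thesis
    using c unfolding x segment_payoff_def by (simp add: field_simps max_def min_def)
qed

lemma integral_segment_payoff: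
  assumes c: "c > 0"
  shows "(\<integral>x. segment_payoff c V x \<partial>segment_strategy c) = V - c"
proof -
  have [measurable]: "segment_payoff c V \<in> borel_measurable borel"
    unfolding segment_payoff_def borel_prod[symmetric] by measurable
  have "(\<lambda>t. indicator {0..c} t * segment_payoff c V (t, c - t)) = (\<lambda>t. (V - c) * indicator {0..c} t)"
    using c by (auto simp: indicator_def segment_payoff_def field_simps)
  then show ?thesis
    using c by (simp add: integral_segment_strategy)
qed

lemma segment_payoff_le:
  assumes "c = min V B" and "V > 0" and "B > 0"
    and "0 \<le> fst x" and "0 \<le> snd x" and "fst x + snd x \<le> B"
  shows "segment_payoff c V x \<le> V - c"
proof (cases "V \<le> B")
  case True
  then show ?thesis
    using assms by (simp add: segment_payoff_def)
next
  case False
  then have c: "c = B"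
    using assms(1) by simp
  have "segment_payoff c V x = (V / c - 1) * (fst x + snd x)"
    using assms c by (simp add: segment_payoff_def min_def field_simps)
  also have "\<dots> \<le> (V / c - 1) * c"
    using False assms c by (intro mult_left_mono) (auto simp: field_simps)
  also have "\<dots> = V - c"
    using assms c by (simp add: field_simps)
  finally show ?thesis .
qed

lemma exp_utility_against_segment:
  assumes "B 1 = B 2" and "\<forall>i\<in>{1, 2}. \<forall>j\<in>{1, 2}. v i j = V" and "i \<in> {1, 2}" and "c > 0"
  shows "exp_utility B v i \<sigma> (segment_strategy c) = (\<integral>x. segment_payoff c V x \<partial>\<sigma>)"
  unfolding exp_utility_def utility_equal_values[OF assms(1-3)] integral_payoff_against_segment[OF assms(4)] ..

lemma segment_strategy_best_reply:
  assumes "B 1 = B 2" and "\<forall>i\<in>{1, 2}. \<forall>j\<in>{1, 2}. v i j = V" and "i \<in> {1, 2}"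
    and "V > 0" and "B i > 0" and c: "c = min V (B i)" and \<sigma>: "mixed_strategy B i \<sigma>"
  shows "exp_utility B v i \<sigma> (segment_strategy c) \<le> exp_utility B v i (segment_strategy c) (segment_strategy c)"
proof -
  interpret prob_space \<sigma>
    using \<sigma> by (simp add: mixed_strategy_def)
  have "c > 0"
    using assms by simp
  have "AE x in \<sigma>. feasible B i x"
    using \<sigma> by (simp add: mixed_strategy_def)
  then have bounded: "AE x in \<sigma>. segment_payoff c V x \<le> V - c"
    by eventually_elim (use assms in \<open>auto intro: segment_payoff_le simp: feasible_def\<close>)
  have "(\<integral>x. segment_payoff c V x \<partial>\<sigma>) \<le> V - c"
  proof (cases "integrable \<sigma> (segment_payoff c V)")
    case True
    then show ?thesis
      using bounded by (rule integral_le_const)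
  next
    case False
    then show ?thesis
      using c by (simp add: not_integrable_integral_eq)
  qed
  then show ?thesis
    using assms \<open>c > 0\<close> by (simp add: exp_utility_against_segment integral_segment_payoff)
qed

theorem theorem2:
  fixes B :: "nat \<Rightarrow> real" and v :: "nat \<Rightarrow> nat \<Rightarrow> real" and c :: real
  assumes "B 1 = B 2"
    and "v 1 1 = v 1 2" and "v 1 2 = v 2 1" and "v 2 1 = v 2 2"
    and "v 1 1 > 0" and "B 1 > 0"
    and "c = min (v 1 1) (B 1)"
  shows "nash_eq B v (segment_strategy c) (segment_strategy c)"
proof -
  have equal_values: "\<forall>i\<in>{1, 2}. \<forall>j\<in>{1, 2}. v i j = v 1 1"
    using assms(2-4) by auto
  have budget: "B i > 0" "c = min (v 1 1) (B i)" "c > 0" "c \<le> B i" if "i \<in> {1, 2}" for i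
    using that assms by auto
  have "mixed_strategy B i (segment_strategy c)" if "i \<in> {1, 2}" for i
    using budget[OF that] by (intro mixed_strategy_segment_strategy)
  moreover have "exp_utility B v i \<sigma> (segment_strategy c)
      \<le> exp_utility B v i (segment_strategy c) (segment_strategy c)"
    if "i \<in> {1, 2}" and "mixed_strategy B i \<sigma>" for i \<sigma>
    using segment_strategy_best_reply[OF assms(1) equal_values that(1) assms(5) budget(1,2)[OF that(1)] that(2)] .
  ultimately show ?thesis
    unfolding nash_eq_def by simp
qed

end
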